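(* For any natural numbers $N,d \geq 1$ there are infinitely many primes not in $\mathcal S_{d,N}$.
   Context: For $N\ge1$ let $\Pi_N=\{\prod_{n=1}^N n^{k_n} : k_n\in\{0,1,2,\dots\}\}$; for $d\ge1$ let $\Sigma_{d,N}=\{m_1+\dots+m_d : m_i\in\Pi_N\}$ and $\mathcal S_{d,N}=\bigcup_{i=1}^d\Sigma_{i,N}$. *)

theory Defs
  imports "HOL-Computational_Algebra.Primes"
begin

definition Pi_set :: "nat \<Rightarrow> nat set" where
  "Pi_set N = {m. \<exists>k :: nat \<Rightarrow> nat. m = (\<Prod>n\<in>{1..N}. n ^ k n)}"

definition Sigma_set :: "nat \<Rightarrow> nat \<Rightarrow> nat set" where
  "Sigma_set d N = {s. \<exists>m :: nat \<Rightarrow> nat. (\<forall>i\<in>{1..d}. m i \<in> Pi_set N) \<and> s = (\<Sum>i\<in>{1..d}. m i)}"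

definition S_set :: "nat \<Rightarrow> nat \<Rightarrow> nat set" where
  "S_set d N = (\<Union>i\<in>{1..d}. Sigma_set i N)"

end

(* A product n_1^k_1 ... n_N^k_N below 2^L has all exponents k_n < L for n \<ge> 2, so
   S_{d,N} has at most d L^(N d) elements below 2^L: only polylogarithmically many.
   Chebyshev's argument, ln C(2n,n) \<le> \<psi>(2n) \<le> ln(2n) \<pi>(2n) log_2(2n), shows that
   \<pi>(x) grows like x / (log x)^2, which is eventually larger than any power of log x.
   Hence the primes below x cannot all lie in S_{d,N} up to a bounded exception. *)

theory Submission
  imports Defs "HOL-Number_Theory.Prime_Powers" "HOL-Real_Asymp.Real_Asymp"
begin

lemma ln_fact_eq_sum_mangoldt:
  assumes "n \<le> M"
  shows "ln (fact n) = (\<Sum>d\<in>{1..M}. mangoldt d * real (n div d))"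
  using assms
proof (induction n)
  case 0
  then show ?case
    by simp
next
  case (Suc n)
  have div_Suc_split: "mangoldt d * real (Suc n div d) =
      mangoldt d * real (n div d) + (if d dvd Suc n then mangoldt d else 0)" for d
    by (auto simp: div_Suc dvd_eq_mod_eq_0 algebra_simps)
  have divisors: "{d\<in>{1..M}. d dvd Suc n} = {d. d dvd Suc n}"
    using Suc.prems by (auto dest: dvd_imp_le) (metis Suc_leI dvd_pos_nat zero_less_Suc)
  have "ln (fact (Suc n)) = ln (fact n) + ln (real (Suc n))"
    by (simp add: ln_mult fact_Suc)
  also have "ln (real (Suc n)) = (\<Sum>d | d dvd Suc n. mangoldt d)"
    using mangoldt_sum[of "Suc n", where 'a=real] by simp
  also have "\<dots> = (\<Sum>d\<in>{1..M}. if d dvd Suc n then mangoldt d else 0)"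
    by (simp only: divisors [symmetric] sum.inter_filter [OF finite_atLeastAtMost])
  also have "ln (fact n) = (\<Sum>d\<in>{1..M}. mangoldt d * real (n div d))"
    using Suc by simp
  finally show ?case
    by (simp only: div_Suc_split sum.distrib)
qed

lemma double_div_le: "(2 * n) div d \<le> 2 * (n div d) + (1::nat)"
proof (cases "d = 0")
  case False
  have "2 * n = 2 * (n div d) * d + 2 * (n mod d)"
    by (metis div_mult_mod_eq distrib_left mult.assoc)
  moreover have "2 * (n mod d) < 2 * d"
    using False by simp
  ultimately have "2 * n < (2 * (n div d) + 2) * d"
    by (simp add: algebra_simps)
  then have "(2 * n) div d < 2 * (n div d) + 2"
    by (rule less_mult_imp_div_less)
  then show ?thesis
    by simp
qed simp

lemma ln_central_binomial_le_sum_mangoldt: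
  "ln (real ((2 * n) choose n)) \<le> (\<Sum>d\<in>{1..2 * n}. mangoldt d)"
proof -
  have "real ((2 * n) choose n) = fact (2 * n) / (fact n * fact n)"
    using binomial_fact[of n "2 * n"] by simp
  then have "ln (real ((2 * n) choose n)) = ln (fact (2 * n)) - 2 * ln (fact n)"
    by (simp add: ln_div ln_mult)
  also have "\<dots> = (\<Sum>d\<in>{1..2 * n}. mangoldt d * (real ((2 * n) div d) - 2 * real (n div d)))"
    using ln_fact_eq_sum_mangoldt[of "2 * n" "2 * n"] ln_fact_eq_sum_mangoldt[of n "2 * n"]
    by (simp add: sum_subtractf sum_distrib_left algebra_simps)
  also have "\<dots> \<le> (\<Sum>d\<in>{1..2 * n}. mangoldt d)"
  proof (intro sum_mono)
    fix d
    have "real ((2 * n) div d) - 2 * real (n div d) \<le> 1"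
      using double_div_le[of n d] by linarith
    then show "mangoldt d * (real ((2 * n) div d) - 2 * real (n div d)) \<le> mangoldt d"
      using mult_left_mono[OF _ mangoldt_nonneg] by fastforce
  qed
  finally show ?thesis .
qed

lemma sum_mangoldt_le_ln_mult_card_primepow:
  "(\<Sum>d\<in>{1..x}. mangoldt d) \<le> ln (real x) * card {d\<in>{1..x}. primepow d}"
proof -
  have "(\<Sum>d\<in>{1..x}. mangoldt d) = (\<Sum>d\<in>{d\<in>{1..x}. primepow d}. mangoldt d)"
    by (intro sum.mono_neutral_right) (auto simp: mangoldt_def)
  also have "\<dots> \<le> (\<Sum>d\<in>{d\<in>{1..x}. primepow d}. ln (real x))"
  proof (intro sum_mono)
    fix d
    assume "d \<in> {d\<in>{1..x}. primepow d}"
    then have "0 < d" "d \<le> x"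
      by auto
    then show "mangoldt d \<le> ln (real x)"
      using mangoldt_le[of d] by (smt (verit) ln_le_cancel_iff of_nat_0_less_iff of_nat_mono)
  qed
  finally show ?thesis
    by (simp add: mult.commute)
qed

lemma card_primepow_le:
  fixes x L :: nat
  assumes "x < 2 ^ L"
  shows "card {d\<in>{1..x}. primepow d} \<le> card {p. prime p \<and> p \<le> x} * L"
proof -
  have "{d\<in>{1..x}. primepow d} \<subseteq> (\<lambda>(p, k). p ^ k) ` ({p. prime p \<and> p \<le> x} \<times> {..<L})"
  proof
    fix d
    assume d: "d \<in> {d\<in>{1..x}. primepow d}"
    then obtain p k where pk: "prime p" "k > 0" "d = p ^ k"
      by (auto simp: primepow_def)
    have "p \<le> d" "2 ^ k \<le> d"
      using pk prime_ge_2_nat[of p] by (auto intro: self_le_power power_mono)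
    moreover have "d \<le> x"
      using d by simp
    ultimately have "p \<le> x" "2 ^ k < (2::nat) ^ L"
      using assms by linarith+
    then show "d \<in> (\<lambda>(p, k). p ^ k) ` ({p. prime p \<and> p \<le> x} \<times> {..<L})"
      using pk by auto
  qed
  then have "card {d\<in>{1..x}. primepow d} \<le> card ({p. prime p \<and> p \<le> x} \<times> {..<L})"
    by (intro surj_card_le) auto
  then show ?thesis
    by (simp add: card_cartesian_product)
qed

lemma chebyshev_lower_bound:
  fixes n L :: nat
  assumes "2 * n < 2 ^ L"
  shows "2 * n \<le> L * (1 + L * card {p. prime p \<and> p \<le> 2 * n})"
proof (cases "n = 0")
  case False
  define \<pi> where "\<pi> = card {p. prime p \<and> p \<le> 2 * n}"
  have "real (2 * n) < 2 ^ L"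
    using assms by (metis of_nat_less_iff of_nat_numeral of_nat_power)
  then have ln_le: "ln (real (2 * n)) \<le> L * ln 2"
    using False by (simp add: ln_realpow [symmetric])
  have "2 * n * ln 2 = ln ((2::real) ^ (2 * n))"
    by (simp add: ln_realpow)
  also have "\<dots> \<le> ln (real (2 * n) * real ((2 * n) choose n))"
  proof -
    have "(2::real) ^ (2 * n) = 4 ^ n"
      by (simp add: power_mult)
    also have "\<dots> \<le> real (2 * n) * real ((2 * n) choose n)"
      using central_binomial_lower_bound[of n] False by (simp add: field_simps)
    finally show ?thesis
      by (rule ln_mono) simp
  qed
  also have "\<dots> = ln (real (2 * n)) + ln (real ((2 * n) choose n))"
    using False by (simp add: ln_mult)
  also have "ln (real ((2 * n) choose n)) \<le> ln (real (2 * n)) * (\<pi> * L)"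
  proof -
    have "ln (real ((2 * n) choose n)) \<le> ln (real (2 * n)) * card {d\<in>{1..2 * n}. primepow d}"
      using ln_central_binomial_le_sum_mangoldt sum_mangoldt_le_ln_mult_card_primepow
      by (rule order_trans)
    also have "\<dots> \<le> ln (real (2 * n)) * (\<pi> * L)"
      using card_primepow_le[OF assms] False by (intro mult_left_mono) (auto simp: \<pi>_def simp flip: of_nat_mult)
    finally show ?thesis .
  qed
  also have "ln (real (2 * n)) + ln (real (2 * n)) * (\<pi> * L) \<le> L * ln 2 + L * ln 2 * (\<pi> * L)"
    using ln_le by (intro add_mono mult_right_mono) auto
  finally have "real (2 * n) * ln 2 \<le> real (L * (1 + L * \<pi>)) * ln 2"
    by (simp add: algebra_simps)
  then have "real (2 * n) \<le> real (L * (1 + L * \<pi>))"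
    by simp
  then show ?thesis
    unfolding \<pi>_def of_nat_le_iff .
qed simp

lemma card_Pi_set_le:
  fixes x L :: nat
  assumes "x < 2 ^ L" "0 < L"
  shows "card (Pi_set N \<inter> {..x}) \<le> L ^ N"
proof -
  have "Pi_set N \<inter> {..x} \<subseteq> (\<lambda>k. \<Prod>n\<in>{1..N}. n ^ k n) ` PiE {1..N} (\<lambda>_. {..<L})"
  proof
    fix m
    assume m: "m \<in> Pi_set N \<inter> {..x}"
    then obtain k where k: "m = (\<Prod>n\<in>{1..N}. n ^ k n)"
      by (auto simp: Pi_set_def)
    \<comment> \<open>The exponent of the factor 1 is arbitrary, so normalise it to 0.\<close>
    define k' where "k' = restrict (\<lambda>n. if n = 1 then 0 else k n) {1..N}"
    have "m = (\<Prod>n\<in>{1..N}. n ^ k' n)"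
      unfolding k k'_def by (intro prod.cong) auto
    moreover have "k n < L" if "n \<in> {2..N}" for n
    proof -
      have "n ^ k n dvd m"
        unfolding k using that by (intro dvd_prodI) auto
      moreover have "0 < m"
        unfolding k by (intro prod_pos) auto
      ultimately have "2 ^ k n \<le> m"
        using that by (meson atLeastAtMost_iff dvd_imp_le order_trans power_mono zero_le_numeral)
      moreover have "m \<le> x"
        using m by simp
      ultimately have "2 ^ k n < (2::nat) ^ L"
        using assms by linarith
      then show ?thesis
        by simp
    qed
    then have "k' \<in> PiE {1..N} (\<lambda>_. {..<L})"
      using assms by (auto simp: k'_def)
    ultimately show "m \<in> (\<lambda>k. \<Prod>n\<in>{1..N}. n ^ k n) ` PiE {1..N} (\<lambda>_. {..<L})"
      by blast
  qed
  then have "card (Pi_set N \<inter> {..x}) \<le> card (PiE {1..N} (\<lambda>_. {..<L :: nat}))"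
    by (intro surj_card_le finite_PiE) auto
  then show ?thesis
    by (simp add: card_PiE)
qed

lemma card_sums_le:
  fixes A :: "nat set"
  shows "card ({s. \<exists>m. (\<forall>i\<in>{1..d}. m i \<in> A) \<and> s = (\<Sum>i\<in>{1..d}. m i)} \<inter> {..x})
    \<le> card (A \<inter> {..x}) ^ d"
proof -
  have "{s. \<exists>m. (\<forall>i\<in>{1..d}. m i \<in> A) \<and> s = (\<Sum>i\<in>{1..d}. m i)} \<inter> {..x}
    \<subseteq> (\<lambda>m. \<Sum>i\<in>{1..d}. m i) ` PiE {1..d} (\<lambda>_. A \<inter> {..x})"
  proof
    fix s
    assume "s \<in> {s. \<exists>m. (\<forall>i\<in>{1..d}. m i \<in> A) \<and> s = (\<Sum>i\<in>{1..d}. m i)} \<inter> {..x}"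
    then obtain m where m: "\<forall>i\<in>{1..d}. m i \<in> A" "s = (\<Sum>i\<in>{1..d}. m i)" "s \<le> x"
      by auto
    have "m i \<le> x" if "i \<in> {1..d}" for i
      using member_le_sum[OF that, of m] m by simp
    then have "restrict m {1..d} \<in> PiE {1..d} (\<lambda>_. A \<inter> {..x})"
      using m by auto
    moreover have "s = (\<Sum>i\<in>{1..d}. restrict m {1..d} i)"
      using m by simp
    ultimately show "s \<in> (\<lambda>m. \<Sum>i\<in>{1..d}. m i) ` PiE {1..d} (\<lambda>_. A \<inter> {..x})"
      by blast
  qed
  then have "card ({s. \<exists>m. (\<forall>i\<in>{1..d}. m i \<in> A) \<and> s = (\<Sum>i\<in>{1..d}. m i)} \<inter> {..x})
    \<le> card (PiE {1..d} (\<lambda>_. A \<inter> {..x}))"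
    by (intro surj_card_le finite_PiE) auto
  then show ?thesis
    by (simp add: card_PiE)
qed

lemma card_S_set_le:
  fixes x L :: nat
  assumes "x < 2 ^ L" "0 < L"
  shows "card (S_set d N \<inter> {..x}) \<le> d * L ^ (N * d)"
proof -
  have S_eq: "S_set d N \<inter> {..x} = (\<Union>i\<in>{1..d}. Sigma_set i N \<inter> {..x})"
    by (auto simp: S_set_def)
  have "card (S_set d N \<inter> {..x}) \<le> (\<Sum>i\<in>{1..d}. card (Sigma_set i N \<inter> {..x}))"
    unfolding S_eq by (rule card_UN_le) simp
  also have "\<dots> \<le> (\<Sum>i\<in>{1..d}. L ^ (N * d))"
  proof (intro sum_mono)
    fix i
    assume "i \<in> {1..d}"
    have "card (Sigma_set i N \<inter> {..x}) \<le> card (Pi_set N \<inter> {..x}) ^ i"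
      unfolding Sigma_set_def by (rule card_sums_le)
    also have "\<dots> \<le> (L ^ N) ^ i"
      using card_Pi_set_le[OF assms] by (rule power_mono) simp
    also have "\<dots> \<le> (L ^ N) ^ d"
      using \<open>i \<in> {1..d}\<close> assms by (intro power_increasing) auto
    finally show "card (Sigma_set i N \<inter> {..x}) \<le> L ^ (N * d)"
      by (simp add: power_mult)
  qed
  finally show ?thesis
    by simp
qed

lemma card_primes_le_of_bounded_exceptions:
  fixes x L B :: nat
  assumes "\<And>p. prime p \<Longrightarrow> p \<notin> S_set d N \<Longrightarrow> p \<le> B" "x < 2 ^ L" "0 < L"
  shows "card {p. prime p \<and> p \<le> x} \<le> B + 1 + d * L ^ (N * d)"
proof -
  have "card {p. prime p \<and> p \<le> x} \<le> card ({..B} \<union> (S_set d N \<inter> {..x}))"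
    using assms(1) by (intro card_mono) auto
  also have "\<dots> \<le> card {..B} + card (S_set d N \<inter> {..x})"
    by (rule card_Un_le)
  also have "\<dots> \<le> B + 1 + d * L ^ (N * d)"
    using card_S_set_le[OF assms(2,3), of d N] by simp
  finally show ?thesis .
qed

lemma eventually_poly_less_exp:
  fixes c K :: nat
  shows "eventually (\<lambda>L. c * L ^ K < 2 ^ L) sequentially"
proof -
  have "eventually (\<lambda>L. real c * real L ^ K < 2 ^ L) sequentially"
    by real_asymp
  then show ?thesis
    by (rule eventually_mono) (metis of_nat_less_iff of_nat_mult of_nat_numeral of_nat_power)
qed

theorem corollary6p11:
  fixes N d :: nat
  assumes "N \<ge> 1" and "d \<ge> 1"
  shows "infinite {p :: nat. prime p \<and> p \<notin> S_set d N}"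
proof
  assume "finite {p :: nat. prime p \<and> p \<notin> S_set d N}"
  then obtain B where B: "\<And>p. prime p \<Longrightarrow> p \<notin> S_set d N \<Longrightarrow> p \<le> B"
    by (auto simp: finite_nat_set_iff_bounded_le)
  define K where "K = N * d"
  obtain L where L: "2 \<le> L" "2 * (B + 2 + d) * L ^ (K + 2) < 2 ^ L"
    using eventually_conj[OF eventually_ge_at_top eventually_poly_less_exp]
    unfolding eventually_sequentially by blast
  define n :: nat where "n = 2 ^ (L - 2)"
  have "2 * (2 * n) = 2 ^ L"
    using L(1) by (simp add: n_def power_Suc [symmetric] del: power_Suc)
  moreover have "0 < n"
    by (simp add: n_def)
  ultimately have "2 * n < 2 ^ L"
    by linarith
  then have "card {p. prime p \<and> p \<le> 2 * n} \<le> B + 1 + d * L ^ K"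
    using card_primes_le_of_bounded_exceptions[OF B] L(1) by (simp add: K_def)
  then have "2 * n \<le> L * (1 + L * (B + 1 + d * L ^ K))"
    using chebyshev_lower_bound[OF \<open>2 * n < 2 ^ L\<close>] by (meson add_left_mono le_trans mult_le_mono2)
  also have "\<dots> = L + (B + 1) * L ^ 2 + d * L ^ (K + 2)"
    by (simp add: algebra_simps power2_eq_square power_add)
  also have "\<dots> \<le> L ^ (K + 2) + (B + 1) * L ^ (K + 2) + d * L ^ (K + 2)"
    using L(1) by (intro add_mono mult_left_mono power_increasing) (auto intro: self_le_power)
  finally have "2 ^ L \<le> 2 * (B + 2 + d) * L ^ (K + 2)"
    using \<open>2 * (2 * n) = 2 ^ L\<close> by (simp add: algebra_simps)
  then show False
    using L(2) by simp
qed

end
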